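(* Every finite graph $G$ is $(\lceil \mathrm{mad}(G)/2\rceil+1,\,1)$-choosable.
   Context: The maximum average degree of $G$ is $\mathrm{mad}(G)=\max\{2|E(H)|/|V(H)| : H \text{ a subgraph of } G\}$. A $(k,d)$-list assignment for $G$ assigns to each vertex $v$ a list $L(v)$ of at least $k$ colors such that $|L(x)\cap L(y)|\le d$ whenever $x$ and $y$ are adjacent. $G$ is $(k,d)$-choosable if for every $(k,d)$-list assignment $L$ there is a proper vertex coloring $\varphi$ of $G$ with $\varphi(v)\in L(v)$ for all $v$. *)

theory Defs
  imports Complex_Main
begin

definition graph :: "'a set \<Rightarrow> 'a set set \<Rightarrow> bool" where
  "graph V E \<longleftrightarrow> finite V \<and> (\<forall>e\<in>E. e \<subseteq> V \<and> card e = 2)"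

definition adjacent :: "'a set set \<Rightarrow> 'a \<Rightarrow> 'a \<Rightarrow> bool" where
  "adjacent E x y \<longleftrightarrow> {x, y} \<in> E"

definition mad :: "'a set \<Rightarrow> 'a set set \<Rightarrow> real" where
  "mad V E = (if V = {} then 0 else
     Max {2 * real (card F) / real (card W) | W F.
            W \<subseteq> V \<and> W \<noteq> {} \<and> F \<subseteq> E \<and> (\<forall>e\<in>F. e \<subseteq> W)})"

definition kd_list_assignment ::
    "'a set \<Rightarrow> 'a set set \<Rightarrow> nat \<Rightarrow> nat \<Rightarrow> ('a \<Rightarrow> 'c set) \<Rightarrow> bool" where
  "kd_list_assignment V E k d L \<longleftrightarrow>
     (\<forall>v\<in>V. finite (L v) \<and> card (L v) \<ge> k) \<and>
     (\<forall>x\<in>V. \<forall>y\<in>V. adjacent E x y \<longrightarrow> card (L x \<inter> L y) \<le> d)"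

definition kd_choosable :: "'a set \<Rightarrow> 'a set set \<Rightarrow> nat \<Rightarrow> nat \<Rightarrow> 'c itself \<Rightarrow> bool" where
  "kd_choosable V E k d (_ :: 'c itself) \<longleftrightarrow>
     (\<forall>L :: 'a \<Rightarrow> 'c set. kd_list_assignment V E k d L \<longrightarrow>
        (\<exists>\<phi>. (\<forall>v\<in>V. \<phi> v \<in> L v) \<and>
             (\<forall>x\<in>V. \<forall>y\<in>V. adjacent E x y \<longrightarrow> \<phi> x \<noteq> \<phi> y)))"

end

(* Orient the edges of G so that every vertex has out-degree at most t = ceil(mad G / 2).
   Choosing a tail for each edge, with every vertex chosen at most t times, is a
   capacitated Hall problem, and Hall's condition holds since by the definition of mad
   every set F of edges spans at least |F| / t vertices.  Given lists of t + 1 colours,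
   let each vertex avoid the colours it shares with the heads of its out-edges: adjacent
   lists share at most one colour, so at most t colours are excluded, and every edge is
   properly coloured because its tail avoided the colour of its head. *)
theory Submission
  imports Defs
begin

definition hall_condition :: "'i set \<Rightarrow> ('i \<Rightarrow> 'a set) \<Rightarrow> nat \<Rightarrow> bool" where
  "hall_condition I A t \<longleftrightarrow> (\<forall>J\<subseteq>I. card J \<le> t * card (\<Union>(A ` J)))"

lemma hall_conditionD: "hall_condition I A t \<Longrightarrow> J \<subseteq> I \<Longrightarrow> card J \<le> t * card (\<Union>(A ` J))"
  unfolding hall_condition_def by blast

lemma hall_condition_violator_contains:
  assumes "hall_condition I A t" "J \<subseteq> I" "t * card (\<Union>(A(i := B) ` J)) < card J"
  shows "i \<in> J"
proof (rule ccontr)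
  assume "i \<notin> J"
  then have "A(i := B) ` J = A ` J" by auto
  then show False using hall_conditionD[OF assms(1,2)] assms(3) by simp
qed

text \<open>Rado's argument: if neither x nor y can be deleted from A i, take violators J1, J2
  of the two smaller families; both contain i, and applying the Hall condition to
  J1 \<union> J2 and to J1 \<inter> J2 - {i} contradicts the submodularity of the neighbourhood size.\<close>
lemma hall_condition_delete_one_of_two:
  assumes hall: "hall_condition I A t" and fin: "finite I" "\<forall>i\<in>I. finite (A i)"
    and "x \<noteq> y"
  shows "hall_condition I (A(i := A i - {x})) t \<or> hall_condition I (A(i := A i - {y})) t"
proof (rule ccontr)
  define A1 where "A1 = A(i := A i - {x})"
  define A2 where "A2 = A(i := A i - {y})"
  assume "\<not> ?thesis"
  then obtain J1 J2 where J1: "J1 \<subseteq> I" "t * card (\<Union>(A1 ` J1)) < card J1"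
    and J2: "J2 \<subseteq> I" "t * card (\<Union>(A2 ` J2)) < card J2"
    by (auto simp: hall_condition_def not_le A1_def A2_def)
  have "i \<in> J1" "i \<in> J2"
    using hall_condition_violator_contains[OF hall J1[unfolded A1_def]]
      hall_condition_violator_contains[OF hall J2[unfolded A2_def]] by auto
  define U1 where "U1 = \<Union>(A1 ` J1)"
  define U2 where "U2 = \<Union>(A2 ` J2)"
  have finJ: "finite J1" "finite J2" using J1 J2 fin(1) finite_subset by auto
  have finU: "finite U1" "finite U2"
    using finJ J1 J2 fin(2) by (auto simp: U1_def U2_def A1_def A2_def)
  have "\<Union>(A ` (J1 \<union> J2)) \<subseteq> U1 \<union> U2"
    using \<open>i \<in> J1\<close> \<open>i \<in> J2\<close> \<open>x \<noteq> y\<close> by (auto simp: U1_def U2_def A1_def A2_def)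
  moreover have "\<Union>(A ` (J1 \<inter> J2 - {i})) \<subseteq> U1 \<inter> U2"
    by (auto simp: U1_def U2_def A1_def A2_def)
  ultimately have "card (\<Union>(A ` (J1 \<union> J2))) \<le> card (U1 \<union> U2)"
    and "card (\<Union>(A ` (J1 \<inter> J2 - {i}))) \<le> card (U1 \<inter> U2)"
    using finU by (simp_all add: card_mono)
  moreover have "J1 \<union> J2 \<subseteq> I" "J1 \<inter> J2 - {i} \<subseteq> I" using J1 J2 by auto
  ultimately have "card (J1 \<union> J2) \<le> t * card (U1 \<union> U2)"
    and "card (J1 \<inter> J2 - {i}) \<le> t * card (U1 \<inter> U2)"
    using hall_conditionD[OF hall] by (meson le_trans mult_le_mono2)+
  moreover have "card (J1 \<inter> J2 - {i}) + 1 = card (J1 \<inter> J2)"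
    using card.remove[of "J1 \<inter> J2" i] \<open>i \<in> J1\<close> \<open>i \<in> J2\<close> finJ by simp
  moreover have "card (J1 \<union> J2) + card (J1 \<inter> J2) = card J1 + card J2"
    using card_Un_Int[OF finJ] by simp
  moreover have "t * card (U1 \<union> U2) + t * card (U1 \<inter> U2) = t * card U1 + t * card U2"
    using card_Un_Int[OF finU] by (metis add_mult_distrib2)
  ultimately show False using J1(2) J2(2) unfolding U1_def U2_def by linarith
qed

lemma hall_condition_nonempty:
  assumes "hall_condition I A t" "i \<in> I"
  shows "A i \<noteq> {}"
proof
  assume "A i = {}"
  then show False using hall_conditionD[OF assms(1), of "{i}"] assms(2) by simp
qed

lemma capacitated_hall:
  assumes "finite I" "\<forall>i\<in>I. finite (A i)" "hall_condition I A t"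
  shows "\<exists>f. (\<forall>i\<in>I. f i \<in> A i) \<and> (\<forall>a. card {i\<in>I. f i = a} \<le> t)"
  using assms(2,3)
proof (induction "\<Sum>i\<in>I. card (A i)" arbitrary: A rule: less_induct)
  case less
  show ?case
  proof (cases "\<exists>i\<in>I. \<exists>x\<in>A i. \<exists>y\<in>A i. x \<noteq> y")
    case True
    then obtain i x y where i: "i \<in> I" "x \<in> A i" "y \<in> A i" "x \<noteq> y" by blast
    then obtain z where z: "z \<in> A i" "hall_condition I (A(i := A i - {z})) t"
      using hall_condition_delete_one_of_two[OF less.prems(2) assms(1) less.prems(1)] by metis
    define B where "B = A(i := A i - {z})"
    have sub: "B j \<subseteq> A j" for j by (simp add: B_def)
    then have finB: "\<forall>j\<in>I. finite (B j)" using less.prems(1) finite_subset by blast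
    have "(\<Sum>j\<in>I. card (B j)) < (\<Sum>j\<in>I. card (A j))"
    proof (rule sum_strict_mono_ex1)
      show "\<forall>j\<in>I. card (B j) \<le> card (A j)" using sub less.prems(1) by (simp add: card_mono)
      have "card (B i) < card (A i)"
        using z(1) i(1) less.prems(1) card_Diff1_less[of "A i" z] by (simp add: B_def)
      then show "\<exists>j\<in>I. card (B j) < card (A j)" using i(1) by blast
    qed (use assms(1) in simp)
    from less.hyps[OF this finB z(2)[folded B_def]] obtain f
      where "\<forall>j\<in>I. f j \<in> B j" "\<forall>a. card {j\<in>I. f j = a} \<le> t" by blast
    then show ?thesis using sub by blast
  next
    case False
    have "\<forall>i\<in>I. \<exists>a. A i = {a}"
    proof
      fix i assume i: "i \<in> I"
      obtain a where "a \<in> A i" using hall_condition_nonempty[OF less.prems(2) i] by blast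
      then have "A i = {a}" using False i by blast
      then show "\<exists>a. A i = {a}" ..
    qed
    then obtain g where g: "\<forall>i\<in>I. A i = {g i}" by (rule bchoice[THEN exE])
    have "card {i\<in>I. g i = a} \<le> t" for a
    proof -
      let ?J = "{i\<in>I. g i = a}"
      have "card ?J \<le> t * card (\<Union>(A ` ?J))"
        using less.prems(2) by (rule hall_conditionD) blast
      also have "\<dots> \<le> t * card {a}"
        using g by (intro mult_le_mono2 card_mono) auto
      finally show ?thesis by simp
    qed
    then show ?thesis using g by auto
  qed
qed

lemma graph_finite_edges:
  assumes "graph V E"
  shows "finite E"
proof (rule finite_subset)
  show "E \<subseteq> Pow V" using assms by (auto simp: graph_def)
  show "finite (Pow V)" using assms by (simp add: graph_def)
qed

lemma graph_edge_other_endpoint: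
  assumes "graph V E" "e \<in> E" "v \<in> e"
  obtains u where "u \<in> V" "u \<noteq> v" "e = {v, u}"
proof -
  obtain a b where "e = {a, b}" "a \<noteq> b"
    using assms(1,2) by (auto simp: graph_def card_2_iff)
  moreover have "e \<subseteq> V" using assms(1,2) by (auto simp: graph_def)
  ultimately show thesis using assms(3) that by auto
qed

lemma density_le_mad:
  assumes "graph V E" "W \<subseteq> V" "W \<noteq> {}" "F \<subseteq> E" "\<forall>e\<in>F. e \<subseteq> W"
  shows "2 * real (card F) / real (card W) \<le> mad V E"
proof -
  let ?S = "{2 * real (card F) / real (card W) | W F.
              W \<subseteq> V \<and> W \<noteq> {} \<and> F \<subseteq> E \<and> (\<forall>e\<in>F. e \<subseteq> W)}"
  have "?S \<subseteq> (\<lambda>(W, F). 2 * real (card F) / real (card W)) ` (Pow V \<times> Pow E)" by auto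
  moreover have "finite (Pow V \<times> Pow E)"
    using assms(1) graph_finite_edges by (auto simp: graph_def)
  ultimately have "finite ?S" by (meson finite_imageI finite_subset)
  moreover have "2 * real (card F) / real (card W) \<in> ?S" using assms(2-) by blast
  ultimately show ?thesis using assms(2,3) unfolding mad_def by auto
qed

lemma card_edges_le_half_mad:
  assumes "graph V E" "F \<subseteq> E"
  shows "card F \<le> nat \<lceil>mad V E / 2\<rceil> * card (\<Union>F)"
proof (cases "F = {}")
  case False
  have sub: "\<Union>F \<subseteq> V" using assms by (auto simp: graph_def)
  then have fin: "finite (\<Union>F)" using assms(1) finite_subset by (auto simp: graph_def)
  have "\<Union>F \<noteq> {}" using False assms by (fastforce simp: graph_def)
  then have pos: "real (card (\<Union>F)) > 0" using fin by (simp add: card_gt_0_iff)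
  have "2 * real (card F) / real (card (\<Union>F)) \<le> mad V E"
    using density_le_mad[OF assms(1) sub \<open>\<Union>F \<noteq> {}\<close> assms(2)] by blast
  then have "real (card F) \<le> mad V E / 2 * real (card (\<Union>F))"
    using pos by (simp add: field_simps)
  also have "\<dots> \<le> real (nat \<lceil>mad V E / 2\<rceil>) * real (card (\<Union>F))"
    using pos by (intro mult_right_mono) (auto simp: real_nat_ceiling_ge)
  finally show ?thesis by (simp flip: of_nat_mult)
qed simp

text \<open>f e is the tail of the edge e, so the bound is on out-degrees.\<close>
lemma orientation_with_bounded_outdegree:
  assumes "graph V E"
  shows "\<exists>f. (\<forall>e\<in>E. f e \<in> e) \<and> (\<forall>v. card {e\<in>E. f e = v} \<le> nat \<lceil>mad V E / 2\<rceil>)"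
proof (rule capacitated_hall)
  show "finite E" using assms by (rule graph_finite_edges)
  show "\<forall>e\<in>E. finite e" using assms by (auto simp: graph_def intro: card_ge_0_finite)
  show "hall_condition E (\<lambda>e. e) (nat \<lceil>mad V E / 2\<rceil>)"
    unfolding hall_condition_def using card_edges_le_half_mad[OF assms] by simp
qed

lemma kd_choosable_of_orientation:
  assumes G: "graph V E" and tail: "\<forall>e\<in>E. f e \<in> e"
    and outdeg: "\<forall>v. card {e\<in>E. f e = v} \<le> t"
  shows "kd_choosable V E (t + 1) 1 TYPE('c)"
  unfolding kd_choosable_def
proof (intro allI impI)
  fix L :: "'a \<Rightarrow> 'c set"
  assume L: "kd_list_assignment V E (t + 1) 1 L"
  define conflicts where "conflicts v = (\<Union>e\<in>{e\<in>E. f e = v}. \<Union>u\<in>e - {v}. L v \<inter> L u)" for v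
  have card_conflicts: "card (conflicts v) \<le> t" if v: "v \<in> V" for v
  proof -
    have one: "card (\<Union>u\<in>e - {v}. L v \<inter> L u) \<le> 1" if e: "e \<in> E" "f e = v" for e
    proof -
      obtain u where "u \<in> V" "u \<noteq> v" "e = {v, u}"
        using graph_edge_other_endpoint[OF G e(1)] tail e by metis
      then show ?thesis
        using L v e(1) by (auto simp: kd_list_assignment_def adjacent_def)
    qed
    have "card (conflicts v) \<le> (\<Sum>e\<in>{e\<in>E. f e = v}. card (\<Union>u\<in>e - {v}. L v \<inter> L u))"
      unfolding conflicts_def using graph_finite_edges[OF G] by (intro card_UN_le) simp
    also have "\<dots> \<le> (\<Sum>e\<in>{e\<in>E. f e = v}. 1)" using one by (intro sum_mono) simp
    also have "\<dots> \<le> t" using outdeg by simp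
    finally show ?thesis .
  qed
  have "L v - conflicts v \<noteq> {}" if v: "v \<in> V" for v
  proof
    assume "L v - conflicts v = {}"
    then have "L v = conflicts v" by (auto simp: conflicts_def)
    moreover have "card (L v) \<ge> t + 1" using L v by (simp add: kd_list_assignment_def)
    ultimately show False using card_conflicts[OF v] by simp
  qed
  then have "\<forall>v\<in>V. \<exists>c. c \<in> L v - conflicts v" by blast
  then obtain \<phi> where \<phi>: "\<forall>v\<in>V. \<phi> v \<in> L v - conflicts v" by (rule bchoice[THEN exE])
  have tail_avoids: "\<phi> (f e) \<notin> L u" if "e \<in> E" "u \<in> e" "u \<noteq> f e" for e u
  proof -
    have "f e \<in> V" using G tail that(1) by (auto simp: graph_def)
    moreover have "L (f e) \<inter> L u \<subseteq> conflicts (f e)"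
      using that unfolding conflicts_def by blast
    ultimately show ?thesis using \<phi> by blast
  qed
  show "\<exists>\<phi>. (\<forall>v\<in>V. \<phi> v \<in> L v) \<and> (\<forall>x\<in>V. \<forall>y\<in>V. adjacent E x y \<longrightarrow> \<phi> x \<noteq> \<phi> y)"
  proof (intro exI conjI ballI impI)
    show "\<phi> v \<in> L v" if "v \<in> V" for v using \<phi> that by blast
    fix x y assume xy: "x \<in> V" "y \<in> V" "adjacent E x y"
    then have e: "{x, y} \<in> E" by (simp add: adjacent_def)
    then have "x \<noteq> y" using G by (force simp: graph_def)
    consider "f {x, y} = x" | "f {x, y} = y" using tail e by blast
    then show "\<phi> x \<noteq> \<phi> y"
    proof cases
      case 1
      then have "\<phi> x \<notin> L y" using tail_avoids[OF e, of y] \<open>x \<noteq> y\<close> by auto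
      then show ?thesis using \<phi> xy(2) by auto
    next
      case 2
      then have "\<phi> y \<notin> L x" using tail_avoids[OF e, of x] \<open>x \<noteq> y\<close> by auto
      then show ?thesis using \<phi> xy(1) by auto
    qed
  qed
qed

theorem lemma1:
  fixes V :: "'a set" and E :: "'a set set"
  assumes "graph V E"
  shows "kd_choosable V E (nat \<lceil>mad V E / 2\<rceil> + 1) 1 TYPE('c)"
proof -
  obtain f where "\<forall>e\<in>E. f e \<in> e" "\<forall>v. card {e\<in>E. f e = v} \<le> nat \<lceil>mad V E / 2\<rceil>"
    using orientation_with_bounded_outdegree[OF assms] by blast
  then show ?thesis using kd_choosable_of_orientation[OF assms] by blast
qed

end
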